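(* Let $I$ be a set of players with $|I|\ge2$ and $S$ a set of states of nature with $|S|\ge2$. Then there is no weak-universal $\infty$-type space on $S$ for player set $I$, and there is no weak-universal $*$-type space on $S$ for player set $I$.
   Context: An $\infty$-field on a nonempty set $M$ is a field of subsets closed under arbitrary intersections. For an $\infty$-field $\Sigma$ on $M$, $\Delta^\infty(M,\Sigma)$ is the set of finitely additive probability measures on $(M,\Sigma)$, endowed with the $\infty$-field generated by the sets $\{\mu:\mu(E)\ge p\}$, $E\in\Sigma$, $p\in[0,1]$. An $\infty$-type space on $S$ for $I$ is $\langle M,\Sigma,(T_i)_{i\in I},\theta\rangle$ with $M$ nonempty, $\Sigma$ an $\infty$-field on $M$, each $T_i:M\to\Delta^\infty(M,\Sigma)$ measurable such that for all $m\in M$, $A\in\Sigma$: $\{m':T_i(m')=T_i(m)\}\subseteq A$ implies $T_i(m)(A)=1$; and $\theta:M\to S$ $\Sigma$–$\mathrm{Pow}(S)$-measurable. A $*$-type space on $S$ for $I$ is $\langle M,(T_i)_{i\in I},\theta\rangle$ with $M$ nonempty, each $T_i$ a function from $M$ to finitely additive probability measures on $(M,\mathrm{Pow}(M))$ with $T_i(m)(\{m':T_i(m')=T_i(m)\})=1$, and $\theta:M\to S$ any function. A type morphism from $\langle M',\Sigma',(T'_i),\theta'\rangle$ to $\langle M,\Sigma,(T_i),\theta\rangle$ (for $*$-type spaces take $\Sigma=\mathrm{Pow}(M)$) is a $\Sigma'$–$\Sigma$-measurable $f:M'\to M$ with $\theta'(m')=\theta(f(m'))$ and $T_i(f(m'))(E)=T'_i(m')(f^{-1}(E))$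 for all $m'$, $E\in\Sigma$, $i\in I$. An $\infty$-type space (resp. $*$-type space) is weak-universal if every $\infty$-type space (resp. $*$-type space) on $S$ for $I$ admits some type morphism into it. *)

theory Defs
  imports Complex_Main
begin

definition inf_field :: "'a set \<Rightarrow> 'a set set \<Rightarrow> bool" where
  "inf_field M \<Sigma> \<longleftrightarrow>
     \<Sigma> \<subseteq> Pow M \<and> M \<in> \<Sigma> \<and>
     (\<forall>A\<in>\<Sigma>. M - A \<in> \<Sigma>) \<and>
     (\<forall>A\<in>\<Sigma>. \<forall>B\<in>\<Sigma>. A \<union> B \<in> \<Sigma>) \<and>
     (\<forall>F. F \<subseteq> \<Sigma> \<longrightarrow> F \<noteq> {} \<longrightarrow> \<Inter>F \<in> \<Sigma>)"

definition gen_inf_field :: "'a set \<Rightarrow> 'a set set \<Rightarrow> 'a set set" where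
  "gen_inf_field X G = \<Inter>{\<Sigma>. inf_field X \<Sigma> \<and> G \<subseteq> \<Sigma>}"

text \<open>Finitely additive probability measure on (M, Sigma), represented as a function
  on all sets which is normalised to 0 outside Sigma (so that equality of measures
  is equality of functions).\<close>
definition fa_prob :: "'a set \<Rightarrow> 'a set set \<Rightarrow> ('a set \<Rightarrow> real) \<Rightarrow> bool" where
  "fa_prob M \<Sigma> \<mu> \<longleftrightarrow>
     (\<forall>E\<in>\<Sigma>. 0 \<le> \<mu> E) \<and> \<mu> M = 1 \<and>
     (\<forall>E\<in>\<Sigma>. \<forall>F\<in>\<Sigma>. E \<inter> F = {} \<longrightarrow> \<mu> (E \<union> F) = \<mu> E + \<mu> F) \<and>
     (\<forall>E. E \<notin> \<Sigma> \<longrightarrow> \<mu> E = 0)"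

definition Delta :: "'a set \<Rightarrow> 'a set set \<Rightarrow> ('a set \<Rightarrow> real) set" where
  "Delta M \<Sigma> = {\<mu>. fa_prob M \<Sigma> \<mu>}"

definition Delta_field :: "'a set \<Rightarrow> 'a set set \<Rightarrow> ('a set \<Rightarrow> real) set set" where
  "Delta_field M \<Sigma> = gen_inf_field (Delta M \<Sigma>)
     {{\<mu>\<in>Delta M \<Sigma>. \<mu> E \<ge> p} | E p. E \<in> \<Sigma> \<and> 0 \<le> p \<and> p \<le> 1}"

definition measurable_map ::
  "'a set \<Rightarrow> 'a set set \<Rightarrow> 'b set \<Rightarrow> 'b set set \<Rightarrow> ('a \<Rightarrow> 'b) \<Rightarrow> bool" where
  "measurable_map M \<Sigma> N \<Sigma>N f \<longleftrightarrow>
     (\<forall>x\<in>M. f x \<in> N) \<and> (\<forall>E\<in>\<Sigma>N. f -` E \<inter> M \<in> \<Sigma>)"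

definition inf_type_space ::
  "'i set \<Rightarrow> 's set \<Rightarrow> 'm set \<Rightarrow> 'm set set \<Rightarrow> ('i \<Rightarrow> 'm \<Rightarrow> ('m set \<Rightarrow> real)) \<Rightarrow> ('m \<Rightarrow> 's) \<Rightarrow> bool"
  where
  "inf_type_space I S M \<Sigma> T \<theta> \<longleftrightarrow>
     M \<noteq> {} \<and> inf_field M \<Sigma> \<and>
     (\<forall>i\<in>I. measurable_map M \<Sigma> (Delta M \<Sigma>) (Delta_field M \<Sigma>) (T i)) \<and>
     (\<forall>i\<in>I. \<forall>m\<in>M. \<forall>A\<in>\<Sigma>. {m'\<in>M. T i m' = T i m} \<subseteq> A \<longrightarrow> T i m A = 1) \<and>
     measurable_map M \<Sigma> S (Pow S) \<theta>"

definition star_type_space ::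
  "'i set \<Rightarrow> 's set \<Rightarrow> 'm set \<Rightarrow> ('i \<Rightarrow> 'm \<Rightarrow> ('m set \<Rightarrow> real)) \<Rightarrow> ('m \<Rightarrow> 's) \<Rightarrow> bool"
  where
  "star_type_space I S M T \<theta> \<longleftrightarrow>
     M \<noteq> {} \<and>
     (\<forall>i\<in>I. \<forall>m\<in>M. fa_prob M (Pow M) (T i m)) \<and>
     (\<forall>i\<in>I. \<forall>m\<in>M. T i m {m'\<in>M. T i m' = T i m} = 1) \<and>
     (\<forall>m\<in>M. \<theta> m \<in> S)"

definition type_morphism ::
  "'i set \<Rightarrow> 'n set \<Rightarrow> 'n set set \<Rightarrow> ('i \<Rightarrow> 'n \<Rightarrow> ('n set \<Rightarrow> real)) \<Rightarrow> ('n \<Rightarrow> 's)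
   \<Rightarrow> 'm set \<Rightarrow> 'm set set \<Rightarrow> ('i \<Rightarrow> 'm \<Rightarrow> ('m set \<Rightarrow> real)) \<Rightarrow> ('m \<Rightarrow> 's)
   \<Rightarrow> ('n \<Rightarrow> 'm) \<Rightarrow> bool"
  where
  "type_morphism I M' \<Sigma>' T' \<theta>' M \<Sigma> T \<theta> f \<longleftrightarrow>
     measurable_map M' \<Sigma>' M \<Sigma> f \<and>
     (\<forall>m'\<in>M'. \<theta>' m' = \<theta> (f m')) \<and>
     (\<forall>i\<in>I. \<forall>m'\<in>M'. \<forall>E\<in>\<Sigma>. T i (f m') E = T' i m' (f -` E \<inter> M'))"

text \<open>Weak universality, relativised to type spaces whose carrier lives in the type 'n
  (HOL cannot quantify over all types inside a formula).\<close>
definition weak_universal_inf ::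
  "'n itself \<Rightarrow> 'i set \<Rightarrow> 's set \<Rightarrow> 'm set \<Rightarrow> 'm set set \<Rightarrow> ('i \<Rightarrow> 'm \<Rightarrow> ('m set \<Rightarrow> real)) \<Rightarrow> ('m \<Rightarrow> 's) \<Rightarrow> bool"
  where
  "weak_universal_inf (_::'n itself) I S M \<Sigma> T \<theta> \<longleftrightarrow>
     inf_type_space I S M \<Sigma> T \<theta> \<and>
     (\<forall>(M'::'n set) \<Sigma>' T' \<theta>'. inf_type_space I S M' \<Sigma>' T' \<theta>' \<longrightarrow>
        (\<exists>f. type_morphism I M' \<Sigma>' T' \<theta>' M \<Sigma> T \<theta> f))"

definition weak_universal_star ::
  "'n itself \<Rightarrow> 'i set \<Rightarrow> 's set \<Rightarrow> 'm set \<Rightarrow> ('i \<Rightarrow> 'm \<Rightarrow> ('m set \<Rightarrow> real)) \<Rightarrow> ('m \<Rightarrow> 's) \<Rightarrow> bool"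
  where
  "weak_universal_star (_::'n itself) I S M T \<theta> \<longleftrightarrow>
     star_type_space I S M T \<theta> \<and>
     (\<forall>(M'::'n set) T' \<theta>'. star_type_space I S M' T' \<theta>' \<longrightarrow>
        (\<exists>f. type_morphism I M' (Pow M') T' \<theta>' M (Pow M) T \<theta> f))"

end

(*
  Suppose (M, \<Sigma>, T, \<theta>) were weak-universal. Well-order the subsets of M and build a
  type space with a point Probe \<alpha> for every index \<alpha>, auxiliary points Pointer \<alpha> h,
  and a point Base, the only point with state s2. At Probe \<alpha> and at every Pointer \<alpha> h,
  player a holds an ultrafilter measure giving probability 1 to
  cone \<alpha> = {Pointer \<alpha> None} \<union> {Pointer \<alpha> (Some \<gamma>) | \<gamma> < \<alpha>} and to each of its tails
  {Pointer \<alpha> (Some \<gamma>) | \<beta> \<le> \<gamma> < \<alpha>}; at Pointer \<alpha> None player b is certain of Base,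
  at Pointer \<alpha> (Some \<gamma>) of Probe \<gamma>.
  Along the well-order, the images f (Probe \<alpha>) under any type morphism f are pairwise
  separated by \<Sigma>: the beliefs of b turn the separation of the earlier images into an event
  that a believes with probability 1 at f (Probe \<beta>) and 0 at f (Probe \<alpha>), for \<beta> < \<alpha>.
  So \<alpha> \<mapsto> f (Probe \<alpha>) injects the power set of M into M, contradicting Cantor's theorem.
  The source is a *-type space, and *-type spaces are \<infinity>-type spaces with the power set as
  field, so the argument covers both kinds of universality.
*)

theory Submission
  imports Defs
begin

section \<open>Finitely additive probabilities\<close>

lemma fa_prob_PowD:
  assumes "fa_prob M (Pow M) \<mu>"
  shows fa_prob_nonneg: "E \<subseteq> M \<Longrightarrow> 0 \<le> \<mu> E"
    and fa_prob_space: "\<mu> M = 1"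
    and fa_prob_additive: "E \<subseteq> M \<Longrightarrow> F \<subseteq> M \<Longrightarrow> E \<inter> F = {} \<Longrightarrow> \<mu> (E \<union> F) = \<mu> E + \<mu> F"
  using assms by (simp_all add: fa_prob_def)

lemma fa_prob_mono:
  assumes "fa_prob M (Pow M) \<mu>" "B \<subseteq> A" "A \<subseteq> M"
  shows "\<mu> B \<le> \<mu> A"
proof -
  have "\<mu> (B \<union> (A - B)) = \<mu> B + \<mu> (A - B)"
    using assms(2,3) by (intro fa_prob_additive[OF assms(1)]) auto
  moreover have "0 \<le> \<mu> (A - B)"
    using assms(3) by (intro fa_prob_nonneg[OF assms(1)]) auto
  moreover have "B \<union> (A - B) = A" using assms(2) by blast
  ultimately show ?thesis by simp
qed

lemma fa_prob_le_one:
  assumes "fa_prob M (Pow M) \<mu>" "A \<subseteq> M"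
  shows "\<mu> A \<le> 1"
  using fa_prob_mono[OF assms order_refl] fa_prob_space[OF assms(1)] by simp

lemma fa_prob_one_mono:
  assumes "fa_prob M (Pow M) \<mu>" "\<mu> B = 1" "B \<subseteq> A" "A \<subseteq> M"
  shows "\<mu> A = 1"
  using fa_prob_mono[OF assms(1,3,4)] fa_prob_le_one[OF assms(1,4)] assms(2) by linarith

lemma fa_prob_disjoint_one:
  assumes "fa_prob M (Pow M) \<mu>" "\<mu> A = 1" "A \<inter> B = {}" "A \<subseteq> M" "B \<subseteq> M"
  shows "\<mu> B = 0"
proof -
  have "\<mu> (A \<union> B) = \<mu> A + \<mu> B"
    using assms(4,5,3) by (rule fa_prob_additive[OF assms(1)])
  moreover have "0 \<le> \<mu> B" "\<mu> (A \<union> B) \<le> 1"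
    using assms(4,5) by (auto intro: fa_prob_nonneg[OF assms(1)] fa_prob_le_one[OF assms(1)])
  ultimately show ?thesis using assms(2) by linarith
qed

definition dirac :: "'a \<Rightarrow> 'a set \<Rightarrow> real" where
  "dirac x E = (if x \<in> E then 1 else 0)"

lemma fa_prob_dirac: "fa_prob UNIV UNIV (dirac x)"
  by (auto simp: fa_prob_def dirac_def)

lemma fa_prob_vimage:
  assumes "fa_prob UNIV UNIV \<mu>"
  shows "fa_prob UNIV UNIV (\<lambda>E. \<mu> (f -` E))"
proof -
  have "fa_prob UNIV (Pow UNIV) \<mu>"
    using assms by simp
  from fa_prob_additive[OF this] show ?thesis
    using assms by (auto simp: fa_prob_def vimage_Int[symmetric])
qed

definition fip :: "'a set set \<Rightarrow> bool" where
  "fip \<B> \<longleftrightarrow> (\<forall>\<G>. \<G> \<subseteq> \<B> \<longrightarrow> finite \<G> \<longrightarrow> \<Inter>\<G> \<noteq> {})"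

lemma fip_insert_Compl:
  assumes "fip \<M>" "\<not> fip (insert A \<M>)"
  shows "fip (insert (- A) \<M>)"
proof -
  obtain \<H> where \<H>: "\<H> \<subseteq> insert A \<M>" "finite \<H>" "\<Inter>\<H> = {}"
    using assms(2) unfolding fip_def by auto
  show ?thesis
    unfolding fip_def
  proof (intro allI impI)
    fix \<K> assume \<K>: "\<K> \<subseteq> insert (- A) \<M>" "finite \<K>"
    have "\<K> - {- A} \<union> (\<H> - {A}) \<subseteq> \<M>" "finite (\<K> - {- A} \<union> (\<H> - {A}))"
      using \<K> \<H> by auto
    then have "\<Inter>(\<K> - {- A} \<union> (\<H> - {A})) \<noteq> {}"
      using assms(1) unfolding fip_def by simp
    moreover have "\<Inter>(\<K> - {- A} \<union> (\<H> - {A})) \<subseteq> \<Inter>\<K>"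
      using \<H>(3) by auto
    ultimately show "\<Inter>\<K> \<noteq> {}" by auto
  qed
qed

lemma fip_Union_chain:
  assumes "\<C> \<noteq> {}" "subset.chain {\<M>. fip \<M>} \<C>"
  shows "fip (\<Union>\<C>)"
  unfolding fip_def
proof (intro allI impI)
  fix \<G> assume "\<G> \<subseteq> \<Union>\<C>" "finite \<G>"
  then obtain \<M> where "\<M> \<in> \<C>" "\<G> \<subseteq> \<M>"
    using finite_subset_Union_chain[OF \<open>finite \<G>\<close> \<open>\<G> \<subseteq> \<Union>\<C>\<close> assms] by blast
  then show "\<Inter>\<G> \<noteq> {}"
    using assms(2) \<open>finite \<G>\<close> by (auto simp: subset.chain_def fip_def)
qed

lemma fip_extends_to_ultra:
  assumes "fip \<B>"
  obtains \<M> where "\<B> \<subseteq> \<M>" "fip \<M>" "\<And>A. A \<in> \<M> \<or> - A \<in> \<M>"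
proof -
  let ?\<A> = "{\<M>. \<B> \<subseteq> \<M> \<and> fip \<M>}"
  have "\<exists>\<M>\<in>?\<A>. \<forall>\<N>\<in>?\<A>. \<M> \<subseteq> \<N> \<longrightarrow> \<N> = \<M>"
  proof (rule subset_Zorn_nonempty)
    fix \<C> assume "\<C> \<noteq> {}" "subset.chain ?\<A> \<C>"
    moreover from this have "subset.chain {\<M>. fip \<M>} \<C>"
      by (auto simp: subset.chain_def)
    ultimately show "\<Union>\<C> \<in> ?\<A>"
      by (auto simp: subset.chain_def intro: fip_Union_chain)
  qed (use assms in blast)
  then obtain \<M> where \<M>: "\<B> \<subseteq> \<M>" "fip \<M>"
    and max: "\<And>\<N>. \<M> \<subseteq> \<N> \<Longrightarrow> fip \<N> \<Longrightarrow> \<N> = \<M>"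
    by auto
  have "A \<in> \<M> \<or> - A \<in> \<M>" for A
    using fip_insert_Compl[OF \<M>(2), of A] max[of "insert A \<M>"] max[of "insert (- A) \<M>"]
    by auto
  with \<M> that show ?thesis by blast
qed

lemma fa_prob_ultra_indicator:
  assumes fip: "fip \<M>" and ultra: "\<And>A. A \<in> \<M> \<or> - A \<in> \<M>"
  shows "fa_prob UNIV UNIV (\<lambda>E. if E \<in> \<M> then 1 else 0)"
proof -
  have empty_inter: "\<not> (\<forall>E\<in>\<G>. E \<in> \<M>)" if "finite \<G>" "\<Inter>\<G> = {}" for \<G>
    using fip that unfolding fip_def by auto
  have disjoint: "\<not> (E \<in> \<M> \<and> F \<in> \<M>)" if "E \<inter> F = {}" for E F
    using empty_inter[of "{E, F}"] that by auto
  have Un: "E \<union> F \<in> \<M> \<longleftrightarrow> E \<in> \<M> \<or> F \<in> \<M>" for E F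
  proof
    assume "E \<union> F \<in> \<M>"
    then show "E \<in> \<M> \<or> F \<in> \<M>"
      using empty_inter[of "{E \<union> F, - E, - F}"] ultra[of E] ultra[of F] by auto
  next
    assume "E \<in> \<M> \<or> F \<in> \<M>"
    then show "E \<union> F \<in> \<M>"
      using disjoint[of E "- (E \<union> F)"] disjoint[of F "- (E \<union> F)"] ultra[of "E \<union> F"] by auto
  qed
  have "UNIV \<in> \<M>"
    using empty_inter[of "{{}}"] ultra[of UNIV] by auto
  then show ?thesis
    using disjoint by (auto simp: fa_prob_def Un)
qed

lemma fip_imp_ex_fa_prob:
  assumes "fip \<B>"
  shows "\<exists>\<mu>. fa_prob UNIV UNIV \<mu> \<and> (\<forall>B\<in>\<B>. \<mu> B = 1)"
proof -
  obtain \<M> where "\<B> \<subseteq> \<M>" "fip \<M>" "\<And>A. A \<in> \<M> \<or> - A \<in> \<M>"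
    using fip_extends_to_ultra[OF assms] by blast
  with fa_prob_ultra_indicator[of \<M>] show ?thesis
    by (intro exI[of _ "\<lambda>E. if E \<in> \<M> then 1 else 0"]) auto
qed

lemma fip_chain:
  assumes "subset.chain UNIV \<B>" "{} \<notin> \<B>"
  shows "fip \<B>"
  unfolding fip_def
proof (intro allI impI)
  fix \<G> assume "\<G> \<subseteq> \<B>" "finite \<G>"
  show "\<Inter>\<G> \<noteq> {}"
  proof (cases "\<G> = {}")
    case False
    have "subset.chain UNIV \<G>"
      using assms(1) \<open>\<G> \<subseteq> \<B>\<close> by (auto simp: subset.chain_def)
    then have "\<Inter>\<G> \<in> \<G>"
      using Inter_in_chain \<open>finite \<G>\<close> False by blast
    with assms(2) \<open>\<G> \<subseteq> \<B>\<close> show ?thesis by auto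
  qed simp
qed

section \<open>Type spaces and \<infinity>-fields\<close>

lemma star_type_space_imp_inf_type_space:
  assumes "star_type_space I S M T \<theta>"
  shows "inf_type_space I S M (Pow M) T \<theta>"
proof -
  have st: "M \<noteq> {}" "\<And>i m. i \<in> I \<Longrightarrow> m \<in> M \<Longrightarrow> fa_prob M (Pow M) (T i m)"
    "\<And>i m. i \<in> I \<Longrightarrow> m \<in> M \<Longrightarrow> T i m {m' \<in> M. T i m' = T i m} = 1" "\<And>m. m \<in> M \<Longrightarrow> \<theta> m \<in> S"
    using assms by (simp_all add: star_type_space_def)
  have "T i m A = 1" if "i \<in> I" "m \<in> M" "A \<subseteq> M" "{m' \<in> M. T i m' = T i m} \<subseteq> A" for i m A
    using fa_prob_one_mono[OF st(2,3)] that by blast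
  moreover have "inf_field M (Pow M)"
    by (auto simp: inf_field_def)
  ultimately show ?thesis
    using st unfolding inf_type_space_def measurable_map_def Delta_def
    by auto
qed

lemma type_morphism_comp:
  assumes f: "type_morphism I M1 \<Sigma>1 T1 \<theta>1 M2 \<Sigma>2 T2 \<theta>2 f"
    and g: "type_morphism I M2 \<Sigma>2 T2 \<theta>2 M3 \<Sigma>3 T3 \<theta>3 g"
  shows "type_morphism I M1 \<Sigma>1 T1 \<theta>1 M3 \<Sigma>3 T3 \<theta>3 (g \<circ> f)"
proof -
  have f_into: "\<And>m. m \<in> M1 \<Longrightarrow> f m \<in> M2"
    and f_meas: "\<And>E. E \<in> \<Sigma>2 \<Longrightarrow> f -` E \<inter> M1 \<in> \<Sigma>1"
    and f_state: "\<And>m. m \<in> M1 \<Longrightarrow> \<theta>1 m = \<theta>2 (f m)"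
    and f_belief: "\<And>i m E. i \<in> I \<Longrightarrow> m \<in> M1 \<Longrightarrow> E \<in> \<Sigma>2 \<Longrightarrow> T2 i (f m) E = T1 i m (f -` E \<inter> M1)"
    using f by (simp_all add: type_morphism_def measurable_map_def)
  have g_into: "\<And>m. m \<in> M2 \<Longrightarrow> g m \<in> M3"
    and g_meas: "\<And>E. E \<in> \<Sigma>3 \<Longrightarrow> g -` E \<inter> M2 \<in> \<Sigma>2"
    and g_state: "\<And>m. m \<in> M2 \<Longrightarrow> \<theta>2 m = \<theta>3 (g m)"
    and g_belief: "\<And>i m E. i \<in> I \<Longrightarrow> m \<in> M2 \<Longrightarrow> E \<in> \<Sigma>3 \<Longrightarrow> T3 i (g m) E = T2 i m (g -` E \<inter> M2)"
    using g by (simp_all add: type_morphism_def measurable_map_def)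
  have vimage_comp: "(g \<circ> f) -` E \<inter> M1 = f -` (g -` E \<inter> M2) \<inter> M1" for E
    using f_into by auto
  show ?thesis
    unfolding type_morphism_def measurable_map_def vimage_comp
    using f_into f_meas f_state f_belief g_into g_meas g_state g_belief by (simp del: vimage_Int)
qed

definition image_belief ::
  "('p \<Rightarrow> 'q) \<Rightarrow> ('i \<Rightarrow> 'p \<Rightarrow> 'p set \<Rightarrow> real) \<Rightarrow> 'i \<Rightarrow> 'q \<Rightarrow> 'q set \<Rightarrow> real"
  where "image_belief e T i q =
    (if q \<in> range e then (\<lambda>E. T i (inv e q) (e -` E)) else dirac q)"

lemma image_belief_apply [simp]:
  "inj e \<Longrightarrow> image_belief e T i (e p) = (\<lambda>E. T i p (e -` E))"
  by (simp add: image_belief_def)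

lemma star_type_space_image:
  assumes "inj e" "star_type_space I S UNIV T \<theta>"
  shows "star_type_space I S UNIV (image_belief e T) (\<theta> \<circ> inv e)"
proof -
  have fa: "fa_prob UNIV UNIV (image_belief e T i q)" if "i \<in> I" for i q
    using assms that by (auto simp: image_belief_def star_type_space_def fa_prob_dirac fa_prob_vimage)
  have certain: "image_belief e T i q {q'. image_belief e T i q' = image_belief e T i q} = 1"
    if "i \<in> I" for i q
  proof (cases "q \<in> range e")
    case True
    then obtain p where p: "q = e p" by blast
    have "fa_prob UNIV (Pow UNIV) (T i p)" "T i p {p'. T i p' = T i p} = 1"
      using assms(2) that by (simp_all add: star_type_space_def)
    moreover have "{p'. T i p' = T i p} \<subseteq> e -` {q'. image_belief e T i q' = image_belief e T i q}"
      using assms(1) p by auto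
    ultimately show ?thesis
      using p assms(1) fa_prob_one_mono by (metis image_belief_apply subset_UNIV)
  next
    case False
    then show ?thesis by (simp add: image_belief_def dirac_def)
  qed
  show ?thesis
    using assms(2) fa certain by (simp add: star_type_space_def)
qed

lemma type_morphism_into_image:
  assumes "inj e"
  shows "type_morphism I UNIV (Pow UNIV) T \<theta> UNIV (Pow UNIV) (image_belief e T) (\<theta> \<circ> inv e) e"
  using assms by (simp add: type_morphism_def measurable_map_def)

lemma inf_fieldD:
  assumes "inf_field M \<Sigma>"
  shows inf_field_subset: "A \<in> \<Sigma> \<Longrightarrow> A \<subseteq> M"
    and inf_field_space: "M \<in> \<Sigma>"
    and inf_field_Diff: "A \<in> \<Sigma> \<Longrightarrow> M - A \<in> \<Sigma>"
    and inf_field_Inter: "\<F> \<subseteq> \<Sigma> \<Longrightarrow> \<F> \<noteq> {} \<Longrightarrow> \<Inter>\<F> \<in> \<Sigma>"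
  using assms unfolding inf_field_def by auto

lemma inf_field_Union:
  assumes "inf_field M \<Sigma>" "\<F> \<subseteq> \<Sigma>"
  shows "\<Union>\<F> \<in> \<Sigma>"
proof (cases "\<F> = {}")
  case True
  then show ?thesis
    using inf_field_Diff[OF assms(1) inf_field_space[OF assms(1)]] by simp
next
  case False
  have "(\<lambda>A. M - A) ` \<F> \<subseteq> \<Sigma>"
    using assms inf_field_Diff by blast
  then have "M - \<Inter>((\<lambda>A. M - A) ` \<F>) \<in> \<Sigma>"
    using assms(1) False by (intro inf_field_Diff inf_field_Inter) auto
  moreover have "M - \<Inter>((\<lambda>A. M - A) ` \<F>) = \<Union>\<F>"
    using assms False inf_field_subset by blast
  ultimately show ?thesis by simp
qed

definition atom :: "'a set set \<Rightarrow> 'a \<Rightarrow> 'a set" where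
  "atom \<Sigma> x = \<Inter>{A \<in> \<Sigma>. x \<in> A}"

lemma atom_in_inf_field:
  assumes "inf_field M \<Sigma>" "x \<in> M"
  shows "atom \<Sigma> x \<in> \<Sigma>"
  unfolding atom_def using assms inf_field_space by (intro inf_field_Inter) auto

lemma mem_atom_self [simp]: "x \<in> atom \<Sigma> x"
  by (simp add: atom_def)

lemma not_mem_atomI: "A \<in> \<Sigma> \<Longrightarrow> x \<in> A \<Longrightarrow> y \<notin> A \<Longrightarrow> y \<notin> atom \<Sigma> x"
  by (auto simp: atom_def)

lemma mem_atom_sym:
  assumes "inf_field M \<Sigma>" "x \<in> M" "y \<in> M" "y \<in> atom \<Sigma> x"
  shows "x \<in> atom \<Sigma> y"
proof (rule ccontr)
  assume "x \<notin> atom \<Sigma> y"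
  then obtain A where "A \<in> \<Sigma>" "y \<in> A" "x \<notin> A"
    by (auto simp: atom_def)
  then have "y \<notin> atom \<Sigma> x"
    using assms(2) by (intro not_mem_atomI[of "M - A"] inf_field_Diff[OF assms(1)]) auto
  with assms(4) show False by contradiction
qed

lemma inf_type_space_level_set:
  assumes "inf_type_space I S M \<Sigma> T \<theta>" "i \<in> I" "E \<in> \<Sigma>" "0 \<le> p" "p \<le> 1"
  shows "{m \<in> M. p \<le> T i m E} \<in> \<Sigma>"
proof -
  let ?G = "{\<mu> \<in> Delta M \<Sigma>. p \<le> \<mu> E}"
  have "?G \<in> Delta_field M \<Sigma>"
    unfolding Delta_field_def gen_inf_field_def using assms(3-5) by blast
  moreover have "measurable_map M \<Sigma> (Delta M \<Sigma>) (Delta_field M \<Sigma>) (T i)"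
    using assms(1,2) by (simp add: inf_type_space_def)
  ultimately have "T i -` ?G \<inter> M \<in> \<Sigma>" "\<forall>m\<in>M. T i m \<in> Delta M \<Sigma>"
    unfolding measurable_map_def by blast+
  moreover have "T i -` ?G \<inter> M = {m \<in> M. p \<le> T i m E}"
    using calculation(2) by blast
  ultimately show ?thesis by simp
qed

lemma inf_type_space_state_set:
  assumes "inf_type_space I S M \<Sigma> T \<theta>" "s \<in> S"
  shows "{m \<in> M. \<theta> m = s} \<in> \<Sigma>"
proof -
  have "\<theta> -` {s} \<inter> M \<in> \<Sigma>"
    using assms by (simp add: inf_type_space_def measurable_map_def)
  moreover have "\<theta> -` {s} \<inter> M = {m \<in> M. \<theta> m = s}" by blast
  ultimately show ?thesis by simp
qed

section \<open>The source type space\<close>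

text \<open>A copy of \<^typ>\<open>'a\<close> well-ordered by the well-ordering theorem, so that the
  construction can use the class \<^class>\<open>wellorder\<close> for the subsets of an arbitrary type.\<close>

typedef 'a wellordered = "UNIV :: 'a set" by simp

definition some_well_order :: "'a rel" where
  "some_well_order = (SOME r. Well_order r \<and> Field r = UNIV)"

lemma wo_rel_some_well_order: "wo_rel (some_well_order :: 'a rel)"
  and Field_some_well_order: "Field (some_well_order :: 'a rel) = UNIV"
  using someI_ex[OF well_ordering[where 'a = 'a]] unfolding some_well_order_def wo_rel_def by blast+

instantiation wellordered :: (type) wellorder
begin

definition less_eq_wellordered :: "'a wellordered \<Rightarrow> 'a wellordered \<Rightarrow> bool" where
  "x \<le> y \<longleftrightarrow> (Rep_wellordered x, Rep_wellordered y) \<in> some_well_order"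

definition less_wellordered :: "'a wellordered \<Rightarrow> 'a wellordered \<Rightarrow> bool" where
  "x < y \<longleftrightarrow> (Rep_wellordered x, Rep_wellordered y) \<in> some_well_order \<and> x \<noteq> y"

instance
proof
  interpret wo_rel "some_well_order :: 'a rel"
    by (rule wo_rel_some_well_order)
  have refl: "(a, a) \<in> some_well_order" for a :: 'a
    using REFL by (simp add: Field_some_well_order refl_on_def)
  have total: "(a, b) \<in> some_well_order \<or> (b, a) \<in> some_well_order" for a b :: 'a
    using TOTALS by (simp add: Field_some_well_order)
  fix x y z :: "'a wellordered"
  show "x \<le> x"
    by (simp add: less_eq_wellordered_def refl)
  show "x \<le> y \<Longrightarrow> y \<le> z \<Longrightarrow> x \<le> z"
    using TRANS by (auto simp: less_eq_wellordered_def dest: transD)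
  show antisym: "x \<le> y \<Longrightarrow> y \<le> x \<Longrightarrow> x = y"
    using ANTISYM by (auto simp: less_eq_wellordered_def Rep_wellordered_inject dest: antisymD)
  show "x < y \<longleftrightarrow> x \<le> y \<and> \<not> y \<le> x"
    using antisym by (auto simp: less_wellordered_def less_eq_wellordered_def refl)
  show "x \<le> y \<or> y \<le> x"
    by (simp add: less_eq_wellordered_def total)
next
  interpret wo_rel "some_well_order :: 'a rel"
    by (rule wo_rel_some_well_order)
  fix P :: "'a wellordered \<Rightarrow> bool" and a :: "'a wellordered"
  assume step: "\<And>x. (\<And>y. y < x \<Longrightarrow> P y) \<Longrightarrow> P x"
  have "P (Abs_wellordered b)" for b
  proof (rule well_order_induct)
    fix b assume IH: "\<forall>c. c \<noteq> b \<and> (c, b) \<in> some_well_order \<longrightarrow> P (Abs_wellordered c)"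
    show "P (Abs_wellordered b)"
    proof (rule step)
      fix y assume "y < Abs_wellordered b"
      then have "Rep_wellordered y \<noteq> b" "(Rep_wellordered y, b) \<in> some_well_order"
        by (auto simp: less_wellordered_def Abs_wellordered_inverse Rep_wellordered_inverse)
      with IH show "P y"
        by (metis Rep_wellordered_inverse)
    qed
  qed
  then show "P a"
    by (metis Rep_wellordered_inverse)
qed

end

datatype 'a point = Base | Probe 'a | Pointer 'a "'a option"

fun pointee :: "'a option \<Rightarrow> 'a point" where
  "pointee None = Base"
| "pointee (Some g) = Probe g"

definition cone :: "'a::wellorder \<Rightarrow> 'a point set" where
  "cone a = Pointer a ` insert None (Some ` {..<a})"

definition tail :: "'a::wellorder \<Rightarrow> 'a \<Rightarrow> 'a point set" where
  "tail b a = Pointer a ` Some ` {b..<a}"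

lemma tail_subset_cone: "tail b a \<subseteq> cone a"
  by (auto simp: tail_def cone_def)

lemma tail_antimono: "c \<le> b \<Longrightarrow> tail b a \<subseteq> tail c a"
  unfolding tail_def by (intro image_mono) auto

definition tail_measures :: "('a::wellorder \<Rightarrow> 'a point set \<Rightarrow> real) \<Rightarrow> bool" where
  "tail_measures \<nu> \<longleftrightarrow>
     (\<forall>a. fa_prob UNIV UNIV (\<nu> a) \<and> \<nu> a (cone a) = 1 \<and> (\<forall>b<a. \<nu> a (tail b a) = 1))"

lemma ex_tail_measures: "\<exists>\<nu>. tail_measures (\<nu> :: 'a::wellorder \<Rightarrow> _)"
proof -
  have "\<exists>\<mu>. fa_prob UNIV UNIV \<mu> \<and> \<mu> (cone a) = 1 \<and> (\<forall>b<a. \<mu> (tail b a) = 1)" for a :: 'a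
  proof -
    let ?\<B> = "insert (cone a) {tail b a | b. b < a}"
    have "tail b a \<subseteq> tail c a \<or> tail c a \<subseteq> tail b a" for b c
      by (metis le_cases tail_antimono)
    then have "subset.chain UNIV ?\<B>"
      unfolding subset.chain_def using tail_subset_cone by blast
    moreover have "{} \<notin> ?\<B>"
      by (auto simp: cone_def tail_def)
    ultimately have "fip ?\<B>"
      by (rule fip_chain)
    then obtain \<mu> where "fa_prob UNIV UNIV \<mu>" "\<forall>B\<in>?\<B>. \<mu> B = 1"
      using fip_imp_ex_fa_prob by blast
    then show ?thesis
      by auto
  qed
  then have "\<forall>a::'a. \<exists>\<mu>. fa_prob UNIV UNIV \<mu> \<and> \<mu> (cone a) = 1 \<and> (\<forall>b<a. \<mu> (tail b a) = 1)"
    by blast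
  then show ?thesis
    unfolding tail_measures_def by (rule choice)
qed

definition source_belief ::
  "'i \<Rightarrow> 'i \<Rightarrow> ('a \<Rightarrow> 'a point set \<Rightarrow> real) \<Rightarrow> 'i \<Rightarrow> 'a point \<Rightarrow> 'a point set \<Rightarrow> real"
  where "source_belief pa pb \<nu> i p =
    (if i = pa then (case p of Base \<Rightarrow> dirac Base | Probe a \<Rightarrow> \<nu> a | Pointer a _ \<Rightarrow> \<nu> a)
     else if i = pb then (case p of Pointer _ h \<Rightarrow> dirac (pointee h) | _ \<Rightarrow> dirac p)
     else dirac p)"

definition source_state :: "'s \<Rightarrow> 's \<Rightarrow> 'a point \<Rightarrow> 's" where
  "source_state s1 s2 p = (if p = Base then s2 else s1)"

lemma source_belief_dirac:
  assumes "i \<noteq> pa \<or> p = Base"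
  obtains q where "source_belief pa pb \<nu> i p = dirac q" "source_belief pa pb \<nu> i q = dirac q"
proof (cases p)
  case (Pointer a h)
  with assms that show ?thesis
    by (cases h; cases "i = pb") (auto simp: source_belief_def)
qed (use assms that in \<open>auto simp: source_belief_def\<close>)

lemma star_type_space_source:
  assumes "tail_measures \<nu>" "s1 \<in> S" "s2 \<in> S"
  shows "star_type_space I S UNIV (source_belief pa pb \<nu>) (source_state s1 s2)"
proof -
  let ?T = "source_belief pa pb \<nu>"
  have \<nu>_fa: "fa_prob UNIV UNIV (\<nu> a)" for a
    using assms(1) by (simp add: tail_measures_def)
  have fa: "fa_prob UNIV UNIV (?T i p)" for i p
    unfolding source_belief_def by (simp add: \<nu>_fa fa_prob_dirac split: point.split)
  have certain: "?T i p {p'. ?T i p' = ?T i p} = 1" for i p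
  proof (cases "i = pa \<and> p \<noteq> Base")
    case True
    then obtain a where a: "?T i p = \<nu> a"
      by (cases p) (auto simp: source_belief_def)
    have "cone a \<subseteq> {p'. ?T i p' = ?T i p}"
      using True a by (auto simp: cone_def source_belief_def)
    moreover have "fa_prob UNIV (Pow UNIV) (\<nu> a)" "\<nu> a (cone a) = 1"
      using assms(1) by (simp_all add: tail_measures_def)
    ultimately show ?thesis
      using a fa_prob_one_mono by (metis subset_UNIV)
  next
    case False
    then have "i \<noteq> pa \<or> p = Base"
      by blast
    then obtain q where "?T i p = dirac q" "?T i q = dirac q"
      by (rule source_belief_dirac)
    then show ?thesis
      by (simp add: dirac_def)
  qed
  show ?thesis
    using fa certain assms(2,3) by (simp add: star_type_space_def source_state_def)
qed

section \<open>Separating the probes\<close>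

locale morphism_from_source =
  fixes I :: "'i set" and S :: "'s set" and M :: "'m set" and \<Sigma> :: "'m set set"
    and T :: "'i \<Rightarrow> 'm \<Rightarrow> 'm set \<Rightarrow> real" and \<theta> :: "'m \<Rightarrow> 's"
    and pa pb :: 'i and s1 s2 :: 's and \<nu> :: "'a::wellorder \<Rightarrow> 'a point set \<Rightarrow> real"
    and f :: "'a point \<Rightarrow> 'm"
  assumes target: "inf_type_space I S M \<Sigma> T \<theta>"
    and players: "pa \<in> I" "pb \<in> I" "pa \<noteq> pb"
    and states: "s1 \<noteq> s2" "s2 \<in> S"
    and tail_measures: "tail_measures \<nu>"
    and morphism: "type_morphism I UNIV UNIV (source_belief pa pb \<nu>) (source_state s1 s2) M \<Sigma> T \<theta> f"
begin

abbreviation probe :: "'a \<Rightarrow> 'm" where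
  "probe a \<equiv> f (Probe a)"

lemma target_field: "inf_field M \<Sigma>"
  using target by (simp add: inf_type_space_def)

lemma f_into: "f p \<in> M"
  and state_f: "\<theta> (f p) = source_state s1 s2 p"
  and belief_f: "i \<in> I \<Longrightarrow> E \<in> \<Sigma> \<Longrightarrow> T i (f p) E = source_belief pa pb \<nu> i p (f -` E)"
  using morphism by (simp_all add: type_morphism_def measurable_map_def)

definition below_atoms :: "'a \<Rightarrow> 'm set" where
  "below_atoms b = \<Union>(insert {m \<in> M. \<theta> m = s2} {atom \<Sigma> (probe d) | d. d < b})"

lemma below_atoms_in_field: "below_atoms b \<in> \<Sigma>"
proof -
  have "{m \<in> M. \<theta> m = s2} \<in> \<Sigma>" "atom \<Sigma> (probe d) \<in> \<Sigma>" for d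
    using inf_type_space_state_set[OF target states(2)] atom_in_inf_field[OF target_field f_into] by auto
  then show ?thesis
    unfolding below_atoms_def by (intro inf_field_Union[OF target_field]) auto
qed

lemma Base_in_below_atoms: "f Base \<in> below_atoms b"
  by (simp add: below_atoms_def f_into state_f source_state_def)

lemma probe_in_below_atoms_iff:
  assumes separated: "\<And>d g. d < a \<Longrightarrow> g < a \<Longrightarrow> d \<noteq> g \<Longrightarrow> probe g \<notin> atom \<Sigma> (probe d)"
    and "b < a" "g < a"
  shows "probe g \<in> below_atoms b \<longleftrightarrow> g < b"
proof
  assume "probe g \<in> below_atoms b"
  then obtain d where "d < b" "probe g \<in> atom \<Sigma> (probe d)"
    using states(1) by (auto simp: below_atoms_def state_f source_state_def)
  moreover have "d < a"
    using \<open>d < b\<close> \<open>b < a\<close> by (rule less_trans)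
  ultimately show "g < b"
    using separated[of d g] \<open>g < a\<close> by (cases "d = g") auto
next
  assume "g < b"
  then show "probe g \<in> below_atoms b"
    unfolding below_atoms_def by (intro UnionI[OF _ mem_atom_self]) auto
qed

lemma probe_not_mem_atom:
  assumes separated: "\<And>d g. d < a \<Longrightarrow> g < a \<Longrightarrow> d \<noteq> g \<Longrightarrow> probe g \<notin> atom \<Sigma> (probe d)"
    and "b < a"
  shows "probe a \<notin> atom \<Sigma> (probe b)"
proof -
  txt \<open>Player b is certain of \<^term>\<open>below_atoms b\<close> exactly at the pointers to its points,
    so the pull-back of E contains \<^term>\<open>cone b\<close> and misses \<^term>\<open>tail b a\<close>.\<close>
  define E where "E = {m \<in> M. 1 \<le> T pb m (below_atoms b)}"
  have E: "E \<in> \<Sigma>"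
    unfolding E_def using target players(2) below_atoms_in_field
    by (rule inf_type_space_level_set) auto
  have pointer_in_E: "f (Pointer c h) \<in> E \<longleftrightarrow> f (pointee h) \<in> below_atoms b" for c h
    using players
    by (simp add: E_def f_into belief_f[OF players(2) below_atoms_in_field] source_belief_def dirac_def)
  have probe_in_below_atoms: "probe g \<in> below_atoms b \<longleftrightarrow> g < b" if "g < a" for g
    using separated \<open>b < a\<close> that by (rule probe_in_below_atoms_iff)
  have "cone b \<subseteq> f -` E"
    using Base_in_below_atoms probe_in_below_atoms \<open>b < a\<close> by (auto simp: cone_def pointer_in_E)
  then have "T pa (probe b) E = 1"
    using tail_measures belief_f[OF players(1) E] fa_prob_one_mono[of UNIV "\<nu> b" "cone b" "f -` E"]
    by (simp add: tail_measures_def source_belief_def)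
  moreover have "tail b a \<inter> f -` E = {}"
    using probe_in_below_atoms by (auto simp: tail_def pointer_in_E)
  then have "T pa (probe a) E = 0"
    using tail_measures \<open>b < a\<close> belief_f[OF players(1) E]
      fa_prob_disjoint_one[of UNIV "\<nu> a" "tail b a" "f -` E"]
    by (simp add: tail_measures_def source_belief_def)
  moreover have "{m \<in> M. 1 \<le> T pa m E} \<in> \<Sigma>"
    using target players(1) E by (rule inf_type_space_level_set) auto
  ultimately show ?thesis
    using f_into by (intro not_mem_atomI[of "{m \<in> M. 1 \<le> T pa m E}"]) auto
qed

lemma probe_not_mem_atom_below: "b < a \<Longrightarrow> probe a \<notin> atom \<Sigma> (probe b)"
proof (induction a arbitrary: b rule: less_induct)
  case (less a)
  have separated: "probe g \<notin> atom \<Sigma> (probe d)" if "d < a" "g < a" "d \<noteq> g" for d g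
  proof (cases "d < g")
    case True
    with less.IH that show ?thesis by blast
  next
    case False
    with that have "probe d \<notin> atom \<Sigma> (probe g)"
      using less.IH by auto
    then show ?thesis
      using mem_atom_sym[OF target_field f_into f_into] by blast
  qed
  show ?case
    using separated less.prems by (rule probe_not_mem_atom)
qed

lemma inj_probe: "inj probe"
proof (rule injI)
  fix a b assume "probe a = probe b"
  then have "probe a \<in> atom \<Sigma> (probe b)" "probe b \<in> atom \<Sigma> (probe a)"
    by (metis mem_atom_self)+
  then show "a = b"
    using probe_not_mem_atom_below by (metis linorder_neq_iff)
qed

end

section \<open>Coding the source into the prescribed type\<close>

text \<open>A point is stored as three tagged sets; the kind tag \<^term>\<open>k + 2\<close> stays apart from
  the component tags 0 and 1.\<close>

definition tag :: "nat \<Rightarrow> 'm + 'i + 's + nat" where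
  "tag n = Inr (Inr (Inr n))"

definition triple_code :: "nat \<Rightarrow> 'm set \<Rightarrow> 'm set \<Rightarrow> ('m + 'i + 's + nat) set set" where
  "triple_code k A B = {insert (tag 0) (Inl ` A), insert (tag 1) (Inl ` B), {tag (k + 2)}}"

definition triple_decode :: "('m + 'i + 's + nat) set set \<Rightarrow> nat set \<times> 'm set \<times> 'm set" where
  "triple_decode C = ({n. tag n \<in> \<Union>C}, Inl -` \<Union>{X \<in> C. tag 0 \<in> X}, Inl -` \<Union>{X \<in> C. tag 1 \<in> X})"

lemma triple_decode_code: "triple_decode (triple_code k A B) = ({0, 1, k + 2}, A, B)"
  by (auto simp: triple_decode_def triple_code_def tag_def)

lemma triple_code_inject: "triple_code k A B = triple_code k' A' B' \<longleftrightarrow> k = k' \<and> A = A' \<and> B = B'"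
proof
  assume "triple_code k A B = triple_code k' A' B'"
  then have "({0, 1, k + 2}, A, B) = ({0, 1, k' + 2}, A', B')"
    by (metis triple_decode_code)
  then have "k + 2 \<in> {0, 1, k' + 2}" "A = A'" "B = B'"
    by auto
  then show "k = k' \<and> A = A' \<and> B = B'"
    by simp
qed simp

fun point_code :: "'m set wellordered point \<Rightarrow> ('m + 'i + 's + nat) set set" where
  "point_code Base = triple_code 0 {} {}"
| "point_code (Probe a) = triple_code 1 (Rep_wellordered a) {}"
| "point_code (Pointer a None) = triple_code 2 (Rep_wellordered a) {}"
| "point_code (Pointer a (Some g)) = triple_code 3 (Rep_wellordered a) (Rep_wellordered g)"

lemma inj_point_code: "inj point_code"
proof (rule injI)
  fix p q :: "'m set wellordered point"
  assume "point_code p = point_code q"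
  then show "p = q"
    by (cases p rule: point_code.cases; cases q rule: point_code.cases)
      (simp_all add: triple_code_inject Rep_wellordered_inject)
qed

lemma not_inj_Pow: "\<not> inj (h :: 'a set \<Rightarrow> 'a)"
proof
  assume "inj h"
  then have "range (inv h) = Pow UNIV"
    using inj_imp_surj_inv by simp
  then show False
    using Cantors_theorem by blast
qed

lemma ex_star_source_without_morphism:
  fixes I :: "'i set" and S :: "'s set" and M :: "'m set"
  assumes "\<exists>a\<in>I. \<exists>b\<in>I. a \<noteq> b" "\<exists>x\<in>S. \<exists>y\<in>S. x \<noteq> y"
    and target: "inf_type_space I S M \<Sigma> T \<theta>"
  obtains T' \<theta>' where "star_type_space I S (UNIV :: ('m + 'i + 's + nat) set set set) T' \<theta>'"
    and "\<And>g. \<not> type_morphism I UNIV (Pow UNIV) T' \<theta>' M \<Sigma> T \<theta> g"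
proof -
  obtain pa pb where players: "pa \<in> I" "pb \<in> I" "pa \<noteq> pb"
    using assms(1) by blast
  obtain s1 s2 where states: "s1 \<in> S" "s2 \<in> S" "s1 \<noteq> s2"
    using assms(2) by blast
  obtain \<nu> :: "'m set wellordered \<Rightarrow> _" where \<nu>: "tail_measures \<nu>"
    using ex_tail_measures by blast
  let ?T = "source_belief pa pb \<nu>" and ?\<theta> = "source_state s1 s2"
  have "star_type_space I S UNIV (image_belief point_code ?T) (?\<theta> \<circ> inv point_code)"
    using inj_point_code star_type_space_source[OF \<nu> states(1,2)] by (rule star_type_space_image)
  moreover have "\<not> type_morphism I UNIV (Pow UNIV) (image_belief point_code ?T) (?\<theta> \<circ> inv point_code)
    M \<Sigma> T \<theta> g" for g
  proof
    assume "type_morphism I UNIV (Pow UNIV) (image_belief point_code ?T) (?\<theta> \<circ> inv point_code)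
      M \<Sigma> T \<theta> g"
    with type_morphism_into_image[OF inj_point_code]
    have "type_morphism I UNIV UNIV ?T ?\<theta> M \<Sigma> T \<theta> (g \<circ> point_code)"
      by (metis Pow_UNIV type_morphism_comp)
    then interpret morphism_from_source I S M \<Sigma> T \<theta> pa pb s1 s2 \<nu> "g \<circ> point_code"
      using target players states \<nu> by unfold_locales auto
    have "inj (probe \<circ> Abs_wellordered)"
      by (rule inj_compose[OF inj_probe]) (simp add: inj_on_def Abs_wellordered_inject)
    with not_inj_Pow show False by blast
  qed
  ultimately show ?thesis
    by (rule that)
qed

theorem theorem4:
  fixes I :: "'i set" and S :: "'s set"
  assumes "\<exists>a\<in>I. \<exists>b\<in>I. a \<noteq> b"
    and "\<exists>x\<in>S. \<exists>y\<in>S. x \<noteq> y"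
  shows "(\<forall>(M::'m set) \<Sigma> T \<theta>.
            \<not> weak_universal_inf TYPE((('m + 'i + 's + nat) set) set) I S M \<Sigma> T \<theta>)
       \<and> (\<forall>(M::'k set) T \<theta>.
            \<not> weak_universal_star TYPE((('k + 'i + 's + nat) set) set) I S M T \<theta>)"
proof (intro conjI allI notI)
  fix M :: "'m set" and \<Sigma> T \<theta>
  assume universal: "weak_universal_inf TYPE((('m + 'i + 's + nat) set) set) I S M \<Sigma> T \<theta>"
  then have "inf_type_space I S M \<Sigma> T \<theta>"
    by (simp add: weak_universal_inf_def)
  then obtain T' \<theta>' where source: "star_type_space I S (UNIV :: ('m + 'i + 's + nat) set set set) T' \<theta>'"
    and no_morphism: "\<And>g. \<not> type_morphism I UNIV (Pow UNIV) T' \<theta>' M \<Sigma> T \<theta> g"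
    using ex_star_source_without_morphism[OF assms] by blast
  from star_type_space_imp_inf_type_space[OF source] universal
  obtain g where "type_morphism I UNIV (Pow UNIV) T' \<theta>' M \<Sigma> T \<theta> g"
    unfolding weak_universal_inf_def by blast
  with no_morphism show False by blast
next
  fix M :: "'k set" and T \<theta>
  assume universal: "weak_universal_star TYPE((('k + 'i + 's + nat) set) set) I S M T \<theta>"
  then have "inf_type_space I S M (Pow M) T \<theta>"
    by (simp add: weak_universal_star_def star_type_space_imp_inf_type_space)
  then obtain T' \<theta>' where source: "star_type_space I S (UNIV :: ('k + 'i + 's + nat) set set set) T' \<theta>'"
    and no_morphism: "\<And>g. \<not> type_morphism I UNIV (Pow UNIV) T' \<theta>' M (Pow M) T \<theta> g"
    using ex_star_source_without_morphism[OF assms] by blast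
  from source universal obtain g where "type_morphism I UNIV (Pow UNIV) T' \<theta>' M (Pow M) T \<theta> g"
    unfolding weak_universal_star_def by blast
  with no_morphism show False by blast
qed

end
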